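(* Let $\mathcal{X}=\{x_1,\dots,x_n\}$, $\mathcal{X}_{\mathrm{in}}\subseteq\mathcal{X}$ with $n_{\mathrm{in}}$ points, and $1\le n_{\mathrm{out}}\le n_{\mathrm{in}}$. For any SPSD $K\in\mathbb{R}^{n\times n}$, uniform subsampling without replacement (returning a uniformly random size-$n_{\mathrm{out}}$ subset of $\mathcal{X}_{\mathrm{in}}$) is a $(K,\nu,0)$-sub-Gaussian thinning algorithm with $\nu=\sqrt{\|K\|_{\max}}/\sqrt{n_{\mathrm{out}}}$.
   Context: $\|K\|_{\max}$ is the largest absolute entry of $K$. $p_{\mathrm{in},i}=\mathbf{1}\{x_i\in\mathcal{X}_{\mathrm{in}}\}/n_{\mathrm{in}}$, $q_{\mathrm{out},i}=\mathbf{1}\{x_i\in\mathcal{X}_{\mathrm{out}}\}/n_{\mathrm{out}}$. A thinning algorithm is $(K,\nu,\delta)$-sub-Gaussian if $K$ is SPSD, $\nu>0$, $\delta\in[0,1)$ and there is an event $\mathcal{E}$ with $\mathbb{P}(\mathcal{E})\ge1-\delta/2$ such that $\mathbb{E}[\exp(\langle u,K(p_{\mathrm{in}}-q_{\mathrm{out}})\rangle)\mathbf{1}_{\mathcal{E}}]\le\exp(\frac{\nu^2}{2}u^\top Ku)$ for all $u\in\mathbb{R}^n$. *)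

theory Defs
  imports "HOL-Analysis.Analysis" "HOL-Probability.Probability"
begin

text \<open>Points x_1..x_n are identified with the elements of a finite index type 'n
  (so n = CARD('n)); vectors in R^n are real^'n, n x n matrices are real^'n^'n.\<close>

definition spsd :: "real^'n^'n \<Rightarrow> bool" where
  "spsd K \<longleftrightarrow> transpose K = K \<and> (\<forall>x::real^'n. 0 \<le> x \<bullet> (K *v x))"

definition max_norm :: "real^'n^'n \<Rightarrow> real" where
  "max_norm K = Max {\<bar>K $ i $ j\<bar> | i j. True}"

definition ind_vec :: "'n set \<Rightarrow> nat \<Rightarrow> real^'n" where
  "ind_vec A m = (\<chi> i. if i \<in> A then 1 / real m else 0)"

text \<open>A (randomised) thinning algorithm on input X_in with output size n_out is
  given by its output distribution, a pmf over subsets of the index set.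
  (K, nu, delta)-sub-Gaussian, as in the paper.\<close>
definition sub_gaussian_thinning ::
  "real^'n^'n \<Rightarrow> real \<Rightarrow> real \<Rightarrow> 'n set \<Rightarrow> nat \<Rightarrow> 'n set pmf \<Rightarrow> bool" where
  "sub_gaussian_thinning K \<nu> \<delta> Xin nout alg \<longleftrightarrow>
     spsd K \<and> \<nu> > 0 \<and> 0 \<le> \<delta> \<and> \<delta> < 1 \<and>
     (\<exists>E. measure_pmf.prob alg E \<ge> 1 - \<delta> / 2 \<and>
        (\<forall>u::real^'n.
           measure_pmf.expectation alg
             (\<lambda>S. exp (u \<bullet> (K *v (ind_vec Xin (card Xin) - ind_vec S nout))) * indicator E S)
           \<le> exp (\<nu>\<^sup>2 / 2 * (u \<bullet> (K *v u)))))"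

definition uniform_subsampling :: "'n set \<Rightarrow> nat \<Rightarrow> 'n set pmf" where
  "uniform_subsampling Xin nout = pmf_of_set {S. S \<subseteq> Xin \<and> card S = nout}"

end

theory Submission
  imports Defs
begin

text \<open>
  For fixed \<open>u\<close> put \<open>v = K u\<close>. Then \<open>\<langle>u, K (p_in - q_out)\<rangle>\<close> is \<open>-1/n_out\<close> times the
  centred sum \<open>\<Sum>i\<in>S. v i - mean\<close> over the uniformly random \<open>n_out\<close>-subset \<open>S\<close>, and
  Cauchy-Schwarz for the semi-inner product given by \<open>K\<close> bounds every \<open>\<bar>v i\<bar>\<close> by
  \<open>sqrt (\<parallel>K\<parallel>_max * u\<^sup>T K u)\<close>. So it suffices to prove Hoeffding's bound
  \<open>exp (m l\<^sup>2 (b - a)\<^sup>2 / 8)\<close> for the moment generating function of a centred sum sampled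
  without replacement. This goes by induction on \<open>m\<close>: every \<open>(m+1)\<close>-subset is \<open>insert j S\<close>
  in exactly \<open>m + 1\<close> ways, and the centred sum over \<open>insert j S\<close> splits into
  \<open>(1 - m/(N-1)) (x j - mean)\<close> plus the centred sum of \<open>S\<close> within \<open>A - {j}\<close>; the induction
  hypothesis bounds the second part and Hoeffding's lemma for a uniformly chosen \<open>j\<close> the first.
\<close>

definition mean :: "'a set \<Rightarrow> ('a \<Rightarrow> real) \<Rightarrow> real" where
  "mean A x = (\<Sum>i\<in>A. x i) / card A"

lemma hoeffdings_lemma_sum_pos:
  fixes x :: "'a \<Rightarrow> real"
  assumes "finite A" "A \<noteq> {}" "\<And>i. i \<in> A \<Longrightarrow> a \<le> x i \<and> x i \<le> b" "l > 0"
  shows "(\<Sum>i\<in>A. exp (l * (x i - mean A x))) \<le> card A * exp (l\<^sup>2 * (b - a)\<^sup>2 / 8)"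
proof -
  let ?M = "measure_pmf (pmf_of_set A)"
  interpret interval_bounded_random_variable ?M x a b
    by unfold_locales (use assms in \<open>auto simp: AE_measure_pmf_iff\<close>)
  have "measure_pmf.expectation (pmf_of_set A) x = mean A x"
    using assms by (simp add: integral_pmf_of_set mean_def)
  then have "nn_integral ?M (\<lambda>i. exp (l * (x i - mean A x))) \<le> ennreal (exp (l\<^sup>2 * (b - a)\<^sup>2 / 8))"
    using Hoeffdings_lemma_nn_integral[OF \<open>l > 0\<close>] by simp
  moreover have "nn_integral ?M (\<lambda>i. exp (l * (x i - mean A x)))
      = ennreal ((\<Sum>i\<in>A. exp (l * (x i - mean A x))) / card A)"
    using assms by (simp add: nn_integral_pmf_of_set ennreal_of_nat_eq_real_of_nat
        divide_ennreal sum_nonneg card_gt_0_iff)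
  ultimately show ?thesis
    using assms by (simp add: ennreal_le_iff2 divide_le_eq card_gt_0_iff mult.commute)
qed

lemma hoeffdings_lemma_sum:
  fixes x :: "'a \<Rightarrow> real"
  assumes "finite A" "\<And>i. i \<in> A \<Longrightarrow> a \<le> x i \<and> x i \<le> b"
  shows "(\<Sum>i\<in>A. exp (l * (x i - mean A x))) \<le> card A * exp (l\<^sup>2 * (b - a)\<^sup>2 / 8)"
proof -
  consider "A = {}" | "l = 0" | "A \<noteq> {}" "l > 0" | "A \<noteq> {}" "l < 0" by linarith
  then show ?thesis
  proof cases
    case 3
    then show ?thesis using hoeffdings_lemma_sum_pos assms by blast
  next
    case 4
    have "(\<Sum>i\<in>A. exp (- l * (- x i - mean A (\<lambda>i. - x i))))
        \<le> card A * exp ((- l)\<^sup>2 * (- a - - b)\<^sup>2 / 8)"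
      using 4 assms by (intro hoeffdings_lemma_sum_pos) auto
    moreover have "mean A (\<lambda>i. - x i) = - mean A x"
      by (simp add: mean_def sum_negf)
    ultimately show ?thesis by (simp add: algebra_simps power2_commute)
  qed (use assms in auto)
qed

lemma hoeffdings_lemma_sum_contracted:
  fixes x :: "'a \<Rightarrow> real"
  assumes "finite A" "\<And>i. i \<in> A \<Longrightarrow> a \<le> x i \<and> x i \<le> b" "\<bar>c\<bar> \<le> 1"
  shows "(\<Sum>i\<in>A. exp (l * c * (x i - mean A x))) \<le> card A * exp (l\<^sup>2 * (b - a)\<^sup>2 / 8)"
proof -
  have "c\<^sup>2 \<le> 1"
    using assms(3) by (simp add: abs_square_le_1)
  then have "(l * c)\<^sup>2 \<le> l\<^sup>2"
    by (simp add: power_mult_distrib mult_left_le)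
  then have "exp ((l * c)\<^sup>2 * (b - a)\<^sup>2 / 8) \<le> exp (l\<^sup>2 * (b - a)\<^sup>2 / 8)"
    by (simp add: divide_right_mono mult_right_mono)
  then show ?thesis
    using hoeffdings_lemma_sum[OF assms(1,2), where l = "l * c"]
    by (meson mult_left_mono of_nat_0_le_iff order_trans)
qed

lemma sum_insert_centered_eq:
  fixes x :: "'a \<Rightarrow> real"
  assumes "finite A" "j \<in> A" "S \<subseteq> A - {j}"
  shows "(\<Sum>i\<in>insert j S. x i - mean A x)
       = (1 - card S / (real (card A) - 1)) * (x j - mean A x) + (\<Sum>i\<in>S. x i - mean (A - {j}) x)"
proof (cases "S = {}")
  case False
  have "finite S" "j \<notin> S" using assms finite_subset by auto
  have "0 < card S" using False \<open>finite S\<close> by (simp add: card_gt_0_iff)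
  moreover have "card S \<le> card (A - {j})" using assms by (intro card_mono) auto
  ultimately have N: "real (card A) - 1 > 0"
    using assms by (simp add: card_Diff_singleton)
  have "mean (A - {j}) x = (card A * mean A x - x j) / (real (card A) - 1)"
    using assms N by (simp add: mean_def sum_diff1 card_Diff_singleton of_nat_diff card_gt_0_iff)
  then have shift: "mean (A - {j}) x - mean A x = - (x j - mean A x) / (real (card A) - 1)"
    using N by (simp add: field_simps)
  have "(\<Sum>i\<in>insert j S. x i - mean A x)
      = (x j - mean A x) + (\<Sum>i\<in>S. x i - mean (A - {j}) x) + card S * (mean (A - {j}) x - mean A x)"
    using \<open>finite S\<close> \<open>j \<notin> S\<close> by (simp add: sum_subtractf algebra_simps)
  also have "\<dots> = (1 - card S / (real (card A) - 1)) * (x j - mean A x) + (\<Sum>i\<in>S. x i - mean (A - {j}) x)"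
    unfolding shift using N by (simp add: field_simps)
  finally show ?thesis .
qed simp

lemma sum_subsets_Suc_card:
  fixes g :: "'a set \<Rightarrow> real"
  assumes "finite A"
  shows "real (Suc m) * (\<Sum>T | T \<subseteq> A \<and> card T = Suc m. g T)
       = (\<Sum>j\<in>A. \<Sum>S | S \<subseteq> A - {j} \<and> card S = m. g (insert j S))"
proof -
  let ?T = "{T. T \<subseteq> A \<and> card T = Suc m}"
  have fin_T: "finite ?T" using assms by (auto intro: finite_subset[of _ "Pow A"])
  have insert_bij: "(\<Sum>S | S \<subseteq> A - {j} \<and> card S = m. g (insert j S)) = (\<Sum>T\<in>{T\<in>?T. j \<in> T}. g T)"
    if "j \<in> A" for j
    by (rule sum.reindex_bij_witness[where i = "\<lambda>T. T - {j}" and j = "insert j"])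
      (use that assms in \<open>auto simp: card_insert_if card_Diff_singleton_if
        finite_subset[OF _ assms] finite_subset[OF _ finite_Diff[OF assms]]\<close>)
  have "(\<Sum>j\<in>A. \<Sum>T\<in>{T\<in>?T. j \<in> T}. g T) = (\<Sum>T\<in>?T. \<Sum>j\<in>{j\<in>A. j \<in> T}. g T)"
    using assms fin_T by (rule sum.swap_restrict)
  also have "\<dots> = (\<Sum>T\<in>?T. real (Suc m) * g T)"
    by (intro sum.cong refl) (auto simp: Int_absorb1 Collect_conj_eq[symmetric] simp flip: Int_def)
  finally show ?thesis
    using insert_bij by (simp add: sum_distrib_left)
qed

lemma hoeffding_without_replacement_sum:
  fixes x :: "'a \<Rightarrow> real"
  assumes "finite A" "m \<le> card A" "\<And>i. i \<in> A \<Longrightarrow> a \<le> x i \<and> x i \<le> b"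
  shows "(\<Sum>S | S \<subseteq> A \<and> card S = m. exp (l * (\<Sum>i\<in>S. x i - mean A x)))
       \<le> (card A choose m) * exp (m * l\<^sup>2 * (b - a)\<^sup>2 / 8)"
  using assms
proof (induction m arbitrary: A)
  case 0
  then have "{S. S \<subseteq> A \<and> card S = 0} = {{}}"
    by (auto dest: finite_subset)
  then show ?case by simp
next
  case (Suc m)
  define N where "N = card A"
  define c where "c = 1 - m / (real N - 1)"
  define G where "G = exp (l\<^sup>2 * (b - a)\<^sup>2 / 8)"
  define H where "H = exp (m * l\<^sup>2 * (b - a)\<^sup>2 / 8)"
  have "\<bar>c\<bar> \<le> 1"
    using Suc.prems(2) by (simp add: c_def N_def divide_le_eq)
  have "(\<Sum>S | S \<subseteq> A - {j} \<and> card S = m. exp (l * (\<Sum>i\<in>insert j S. x i - mean A x)))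
      \<le> exp (l * c * (x j - mean A x)) * ((N - 1 choose m) * H)" if "j \<in> A" for j
  proof -
    have "(\<Sum>S | S \<subseteq> A - {j} \<and> card S = m. exp (l * (\<Sum>i\<in>insert j S. x i - mean A x)))
        = exp (l * c * (x j - mean A x))
          * (\<Sum>S | S \<subseteq> A - {j} \<and> card S = m. exp (l * (\<Sum>i\<in>S. x i - mean (A - {j}) x)))"
      using Suc.prems(1) that
      by (simp add: sum_distrib_left sum_insert_centered_eq c_def N_def distrib_left exp_add mult.assoc)
    also have "\<dots> \<le> exp (l * c * (x j - mean A x)) * ((N - 1 choose m) * H)"
      using Suc.IH[of "A - {j}"] Suc.prems that by (simp add: N_def H_def)
    finally show ?thesis .
  qed
  then have "Suc m * (\<Sum>S | S \<subseteq> A \<and> card S = Suc m. exp (l * (\<Sum>i\<in>S. x i - mean A x)))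
      \<le> (\<Sum>j\<in>A. exp (l * c * (x j - mean A x))) * ((N - 1 choose m) * H)"
    unfolding sum_subsets_Suc_card[OF Suc.prems(1)] sum_distrib_right by (rule sum_mono)
  also have "\<dots> \<le> N * G * ((N - 1 choose m) * H)"
    using hoeffdings_lemma_sum_contracted[OF Suc.prems(1,3) \<open>\<bar>c\<bar> \<le> 1\<close>, where l = l]
    by (intro mult_right_mono) (simp_all add: N_def G_def H_def)
  also have "\<dots> = (N * (N - 1 choose m)) * (G * H)"
    by (simp add: algebra_simps)
  also have "\<dots> = Suc m * ((N choose Suc m) * exp (Suc m * l\<^sup>2 * (b - a)\<^sup>2 / 8))"
  proof -
    have "real (N * (N - 1 choose m)) = Suc m * (N choose Suc m)"
      by (simp only: binomial_absorption of_nat_mult)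
    moreover have "G * H = exp (Suc m * l\<^sup>2 * (b - a)\<^sup>2 / 8)"
      by (simp add: G_def H_def flip: exp_add) (simp add: field_simps)
    ultimately show ?thesis by (simp add: algebra_simps)
  qed
  finally show ?case
    unfolding N_def by (simp only: mult_le_cancel_left_pos of_nat_0_less_iff zero_less_Suc)
qed

lemma hoeffding_without_replacement:
  fixes x :: "'a \<Rightarrow> real"
  assumes "finite A" "m \<le> card A" "\<And>i. i \<in> A \<Longrightarrow> a \<le> x i \<and> x i \<le> b"
  shows "measure_pmf.expectation (pmf_of_set {S. S \<subseteq> A \<and> card S = m})
           (\<lambda>S. exp (l * (\<Sum>i\<in>S. x i - mean A x)))
       \<le> exp (m * l\<^sup>2 * (b - a)\<^sup>2 / 8)"
proof -
  let ?Subs = "{S. S \<subseteq> A \<and> card S = m}"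
  have card: "card ?Subs = card A choose m"
    using assms(1) by (rule n_subsets)
  with assms(2) have "card ?Subs > 0" by simp
  then have "finite ?Subs" "?Subs \<noteq> {}" by (auto simp: card_gt_0_iff)
  then show ?thesis
    using hoeffding_without_replacement_sum[OF assms, where l = l] assms(2)
    by (simp add: integral_pmf_of_set card divide_le_eq mult.commute)
qed

lemma nonneg_quadratic_discriminant_le:
  fixes p q r :: real
  assumes "0 \<le> q" and nonneg: "\<And>t. 0 \<le> p + 2 * t * r + t\<^sup>2 * q"
  shows "r\<^sup>2 \<le> p * q"
proof (cases "q = 0")
  case True
  have "r = 0"
  proof (rule ccontr)
    assume "r \<noteq> 0"
    then have "p + 2 * (- (p + 1) / (2 * r)) * r + (- (p + 1) / (2 * r))\<^sup>2 * q = -1"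
      using True by (simp add: field_simps)
    with nonneg[of "- (p + 1) / (2 * r)"] show False by simp
  qed
  then show ?thesis using True by simp
next
  case False
  with \<open>0 \<le> q\<close> have "q > 0" by simp
  have "0 \<le> p + 2 * (- r / q) * r + (- r / q)\<^sup>2 * q" by (rule nonneg)
  also have "\<dots> = (p * q - r\<^sup>2) / q" using \<open>q > 0\<close> by (simp add: field_simps power2_eq_square)
  finally show ?thesis using \<open>q > 0\<close> by (simp add: zero_le_divide_iff)
qed

lemma inner_mult_vec_commute:
  fixes K :: "real^'n^'n"
  assumes "transpose K = K"
  shows "u \<bullet> (K *v w) = (K *v u) \<bullet> w"
  by (metis assms dot_lmul_matrix vector_transpose_matrix)

lemma spsd_cauchy_schwarz:
  fixes K :: "real^'n^'n"
  assumes "spsd K"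
  shows "(x \<bullet> (K *v y))\<^sup>2 \<le> (x \<bullet> (K *v x)) * (y \<bullet> (K *v y))"
proof (rule nonneg_quadratic_discriminant_le)
  show "0 \<le> y \<bullet> (K *v y)" using assms by (simp add: spsd_def)
  have "y \<bullet> (K *v x) = x \<bullet> (K *v y)"
    using assms inner_mult_vec_commute[of K y x] by (simp add: spsd_def inner_commute)
  moreover have "0 \<le> (x + t *\<^sub>R y) \<bullet> (K *v (x + t *\<^sub>R y))" for t
    using assms by (simp add: spsd_def)
  ultimately show "0 \<le> x \<bullet> (K *v x) + 2 * t * (x \<bullet> (K *v y)) + t\<^sup>2 * (y \<bullet> (K *v y))" for t
    by (simp add: matrix_vector_right_distrib matrix_vector_mult_scaleR inner_add_left inner_add_right
        power2_eq_square algebra_simps)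
qed

lemma spsd_mult_vec_component_le:
  fixes K :: "real^'n^'n"
  assumes "spsd K"
  shows "((K *v u) $ i)\<^sup>2 \<le> K $ i $ i * (u \<bullet> (K *v u))"
proof -
  have "(K *v u) $ i = axis i 1 \<bullet> (K *v u)" by (simp add: inner_axis')
  moreover have "axis i 1 \<bullet> (K *v axis i 1) = K $ i $ i"
    by (simp add: inner_axis' matrix_vector_mult_basis column_def)
  ultimately show ?thesis using spsd_cauchy_schwarz[OF assms, of "axis i 1" u] by simp
qed

lemma abs_le_max_norm: "\<bar>K $ i $ j\<bar> \<le> max_norm K"
proof -
  have "{\<bar>K $ i $ j\<bar> | i j. True} = (\<lambda>(i, j). \<bar>K $ i $ j\<bar>) ` UNIV" by auto
  then have "finite {\<bar>K $ i $ j\<bar> | i j. True}" by simp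
  then show ?thesis unfolding max_norm_def by (rule Max_ge) auto
qed

lemma max_norm_pos:
  assumes "K \<noteq> 0"
  shows "0 < max_norm K"
proof -
  obtain i j where "K $ i $ j \<noteq> 0" using assms by (metis vec_eq_iff zero_index)
  then show ?thesis using abs_le_max_norm[of K i j] by simp
qed

lemma spsd_mult_vec_component_bound:
  fixes K :: "real^'n^'n"
  assumes "spsd K"
  shows "\<bar>(K *v u) $ i\<bar> \<le> sqrt (max_norm K * (u \<bullet> (K *v u)))"
proof -
  have "K $ i $ i * (u \<bullet> (K *v u)) \<le> max_norm K * (u \<bullet> (K *v u))"
    using abs_le_max_norm[of K i i] assms by (intro mult_right_mono) (auto simp: spsd_def)
  then have "((K *v u) $ i)\<^sup>2 \<le> max_norm K * (u \<bullet> (K *v u))"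
    using spsd_mult_vec_component_le[OF assms, of u i] by linarith
  then show ?thesis by (metis real_sqrt_abs real_sqrt_le_mono)
qed

lemma inner_ind_vec: "v \<bullet> ind_vec A k = (\<Sum>i\<in>A. v $ i) / k"
proof -
  have "v \<bullet> ind_vec A k = (\<Sum>i\<in>UNIV. if i \<in> A then v $ i / k else 0)"
    unfolding inner_vec_def ind_vec_def by (intro sum.cong) auto
  then show ?thesis by (simp add: sum.If_cases sum_divide_distrib)
qed

lemma inner_mult_vec_ind_vec_diff:
  fixes K :: "real^'n^'n"
  assumes "transpose K = K" "S \<noteq> {}"
  shows "u \<bullet> (K *v (ind_vec A (card A) - ind_vec S (card S)))
       = - (\<Sum>i\<in>S. (K *v u) $ i - mean A (\<lambda>i. (K *v u) $ i)) / card S"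
proof -
  have "u \<bullet> (K *v (ind_vec A (card A) - ind_vec S (card S)))
      = mean A (\<lambda>i. (K *v u) $ i) - (\<Sum>i\<in>S. (K *v u) $ i) / card S"
    by (simp add: inner_mult_vec_commute[OF assms(1)] inner_diff_right inner_ind_vec mean_def)
  also have "\<dots> = - (\<Sum>i\<in>S. (K *v u) $ i - mean A (\<lambda>i. (K *v u) $ i)) / card S"
    using assms(2) by (simp add: sum_subtractf diff_divide_distrib)
  finally show ?thesis .
qed

lemma uniform_subsampling_mgf_le:
  fixes K :: "real^'n^'n"
  assumes "spsd K" "1 \<le> m" "m \<le> card A"
  shows "measure_pmf.expectation (uniform_subsampling A m)
           (\<lambda>S. exp (u \<bullet> (K *v (ind_vec A (card A) - ind_vec S m))))
       \<le> exp ((sqrt (max_norm K) / sqrt m)\<^sup>2 / 2 * (u \<bullet> (K *v u)))"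
proof -
  define v where "v = (\<lambda>i. (K *v u) $ i)"
  define c where "c = sqrt (max_norm K * (u \<bullet> (K *v u)))"
  let ?Subs = "{S. S \<subseteq> A \<and> card S = m}"
  have "card ?Subs > 0"
    using assms(3) by (simp add: n_subsets)
  then have "finite ?Subs" "?Subs \<noteq> {}"
    by (auto simp: card_gt_0_iff)
  have "u \<bullet> (K *v (ind_vec A (card A) - ind_vec S m)) = - 1 / m * (\<Sum>i\<in>S. v i - mean A v)"
    if "S \<in> ?Subs" for S
  proof -
    have "S \<noteq> {}" using that assms(2) by auto
    then show ?thesis
      using that assms(1) inner_mult_vec_ind_vec_diff[of K S u A] by (simp add: spsd_def v_def)
  qed
  with \<open>finite ?Subs\<close> \<open>?Subs \<noteq> {}\<close>
  have "measure_pmf.expectation (uniform_subsampling A m)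
        (\<lambda>S. exp (u \<bullet> (K *v (ind_vec A (card A) - ind_vec S m))))
      = measure_pmf.expectation (pmf_of_set ?Subs) (\<lambda>S. exp (- 1 / m * (\<Sum>i\<in>S. v i - mean A v)))"
    unfolding uniform_subsampling_def
    by (intro integral_cong_AE) (auto simp: AE_measure_pmf_iff)
  also have "\<dots> \<le> exp (m * (- 1 / m)\<^sup>2 * (c - - c)\<^sup>2 / 8)"
    using spsd_mult_vec_component_bound[OF assms(1), of u] assms(3)
    by (intro hoeffding_without_replacement[where a = "- c" and b = c])
      (auto simp: v_def c_def abs_le_iff minus_le_iff)
  also have "\<dots> = exp ((sqrt (max_norm K) / sqrt m)\<^sup>2 / 2 * (u \<bullet> (K *v u)))"
  proof -
    have "0 \<le> max_norm K" using abs_le_max_norm[of K] by (meson abs_ge_zero order_trans)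
    moreover have "0 \<le> u \<bullet> (K *v u)" using assms(1) by (simp add: spsd_def)
    ultimately show ?thesis
      using assms(2) by (simp add: c_def power_divide power_mult_distrib field_simps power2_eq_square)
  qed
  finally show ?thesis .
qed

theorem propositionB1:
  fixes K :: "real^'n^'n" and Xin :: "'n set" and nout :: nat
  assumes "spsd K"
    and "K \<noteq> 0"
    and "1 \<le> nout" and "nout \<le> card Xin"
  shows "sub_gaussian_thinning K (sqrt (max_norm K) / sqrt (real nout)) 0 Xin nout
           (uniform_subsampling Xin nout)"
proof -
  have "sqrt (max_norm K) / sqrt (real nout) > 0"
    using max_norm_pos[OF assms(2)] assms(3) by simp
  moreover have "measure_pmf.prob (uniform_subsampling Xin nout) UNIV \<ge> 1 - 0 / 2"
    by (simp add: measure_pmf.prob_space)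
  ultimately show ?thesis
    using assms(1) uniform_subsampling_mgf_le[OF assms(1,3,4)]
    unfolding sub_gaussian_thinning_def by (auto intro!: exI[of _ UNIV])
qed

end
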